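(* Let $\gamma_1,\gamma_2>0$ and consider the birth-death chain RDS $(\theta,\varphi)$ on $\mathbb{N}_0$ described in the context, and let $W_0=\{0,2,4,\dots\}$, $W_1=\{1,3,5,\dots\}$. Let $K:\mathcal{Q}_+\to\mathcal{P}(\mathbb{N}_0)$, $q\mapsto K_q$, be a finite random set such that, for some $i\in\{0,1\}$, $K_q\subset W_i$ for $\mathbb{P}$-a.e. $q$. Then $\#\varphi^n_q(K_q)\to1$ in probability as $n\to\infty$ (where $\#$ denotes cardinality).
   Context: Noise space: $\mathcal{Q}_+=\{q=(q_n)_{n\in\mathbb{N}_0}: q_n\in[0,1]\}$ with the product Borel $\sigma$-algebra and the product measure $\mathbb{P}=\lambda^{\mathbb{N}_0}$, $\lambda$ Lebesgue measure on $[0,1]$; shift $\theta(q_0,q_1,\dots)=(q_1,q_2,\dots)$. For $q\in\mathcal{Q}_+$ define $f_q:\mathbb{N}_0\to\mathbb{N}_0$ by $f_q(x)=x+1$ if $q_0<\frac{\gamma_1}{\gamma_1+\gamma_2x}$ and $f_q(x)=x-1$ otherwise. The cocycle is $\varphi^0_q(x)=x$ and $\varphi^n_q(x)=f_{\theta^{n-1}q}\circ\cdots\circ f_q(x)$ for $n\geq1$. A map $K:\mathcal{Q}_+\to\mathcal{P}(\mathbb{N}_0)$ is a random set if $q\mapsto d(x,K_q)=\inf_{y\in K_q}|x-y|$ is measurable for every $x$; it is a finite random set if moreover $K_q$ is nonempty and finite for every $q$. *)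

theory Defs
  imports "HOL-Probability.Probability"
begin

definition noise :: "(nat \<Rightarrow> real) measure" where
  "noise = PiM UNIV (\<lambda>_. restrict_space lborel {0..1::real})"

definition shift :: "(nat \<Rightarrow> real) \<Rightarrow> (nat \<Rightarrow> real)" where
  "shift q = (\<lambda>n. q (Suc n))"

text \<open>One-step map f_q (nat subtraction; the case x = 0 moving down only
  happens on the null event q 0 = 1).\<close>
definition fstep :: "real \<Rightarrow> real \<Rightarrow> (nat \<Rightarrow> real) \<Rightarrow> nat \<Rightarrow> nat" where
  "fstep g1 g2 q x = (if q 0 < g1 / (g1 + g2 * real x) then x + 1 else x - 1)"

fun phi :: "real \<Rightarrow> real \<Rightarrow> nat \<Rightarrow> (nat \<Rightarrow> real) \<Rightarrow> nat \<Rightarrow> nat" where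
  "phi g1 g2 0 q x = x"
| "phi g1 g2 (Suc n) q x = fstep g1 g2 ((shift ^^ n) q) (phi g1 g2 n q x)"

definition setdist :: "nat \<Rightarrow> nat set \<Rightarrow> ereal" where
  "setdist x K = (INF y\<in>K. ereal \<bar>real x - real y\<bar>)"

definition random_set :: "((nat \<Rightarrow> real) \<Rightarrow> nat set) \<Rightarrow> bool" where
  "random_set K \<longleftrightarrow> (\<forall>x. (\<lambda>q. setdist x (K q)) \<in> borel_measurable noise)"

definition finite_random_set :: "((nat \<Rightarrow> real) \<Rightarrow> nat set) \<Rightarrow> bool" where
  "finite_random_set K \<longleftrightarrow> random_set K \<and>
     (\<forall>q\<in>space noise. K q \<noteq> {} \<and> finite (K q))"

definition W :: "nat \<Rightarrow> nat set" where
  "W i = {x. x mod 2 = i}"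

end

theory Submission
  imports Defs
begin

text \<open>
  Almost surely every step of the chain is +1 or -1, so two trajectories started at points of
  equal parity keep equal parity, and once they meet they move together. Above the level
  3 g1/g2 an up-step has probability at most 1/4, which yields a tail bound
  P(phi n q y \<ge> k) \<le> A / 2^k uniform in n. Hence two trajectories that have not met
  are both below a level R except with probability O(2^-R); with probability
  \<delta> = (g2/(g1+g2))^R, independently of the past, the next R noise values force R downward
  steps, which bring both to {0, 1}, where equal parity makes them coincide. So the
  probability u n of not having met satisfies u (n + R) \<le> (1 - \<delta>) u n + \<delta> O(2^-R) for
  every R, and u n \<rightarrow> 0. A finite random set lies in {..m} up to small probability, and
  its image is a singleton as soon as all pairs of points of {..m} of its parity have met.
\<close>

abbreviation unit_interval :: "real measure" where
  "unit_interval \<equiv> restrict_space lborel {0..1}"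

lemma prob_space_unit_interval: "prob_space unit_interval"
  by (rule prob_spaceI) (simp add: space_restrict_space emeasure_restrict_space)

interpretation noise: prob_space noise
  unfolding noise_def by (intro prob_space_PiM prob_space_unit_interval)

interpretation noise_coords: product_prob_space "\<lambda>_::nat. unit_interval" UNIV
  by (intro product_prob_spaceI prob_space_unit_interval)

lemma space_noise: "space noise = {q. \<forall>i. q i \<in> {0..1}}"
  by (auto simp: noise_def space_PiM PiE_def Pi_def space_restrict_space)

lemma measurable_noise_component [measurable]: "(\<lambda>q. q i) \<in> noise \<rightarrow>\<^sub>M unit_interval"
  unfolding noise_def by (rule measurable_component_singleton) simp

lemma indep_vars_noise_components: "noise.indep_vars (\<lambda>_. unit_interval) (\<lambda>i q. q i) UNIV"
proof -
  have "PiM UNIV (\<lambda>i. distr noise unit_interval (\<lambda>q. q i)) = noise"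
    unfolding noise_def using noise_coords.PiM_component by simp
  moreover have "distr noise noise (\<lambda>q. \<lambda>i\<in>UNIV. q i) = noise"
    by (simp add: restrict_UNIV)
  ultimately show ?thesis
    by (subst noise.indep_vars_iff_distr_eq_PiM) (simp_all add: noise_def[symmetric])
qed

lemma measure_unit_interval_atLeastLessThan:
  assumes "0 \<le> a" "a \<le> b" "b \<le> 1"
  shows "{a..<b} \<in> sets unit_interval" and "measure unit_interval {a..<b} = b - a"
proof -
  show "{a..<b} \<in> sets unit_interval"
    using assms by (auto simp: sets_restrict_space_iff)
  have "measure unit_interval {a..<b} = measure lborel {a..<b}"
    using assms by (intro measure_restrict_space) auto
  then show "measure unit_interval {a..<b} = b - a"
    using assms by simp
qed

lemma AE_noise_less_1: "AE q in noise. \<forall>j. q j < 1"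
proof -
  have "AE t in unit_interval. t < 1"
    by (rule AE_I'[of "{1}"])
      (auto simp: null_sets_def emeasure_restrict_space sets_restrict_space_iff space_restrict_space)
  then have "AE q in noise. q j < 1" for j
    unfolding noise_def by (rule noise_coords.AE_component[of j, simplified])
  then show ?thesis
    by (simp add: AE_all_countable)
qed

lemma funpow_shift: "(shift ^^ n) q = (\<lambda>j. q (j + n))"
  by (induction n) (auto simp: shift_def)

lemma phi_Suc_explicit:
  "phi g1 g2 (Suc n) q x =
    (if q n < g1 / (g1 + g2 * real (phi g1 g2 n q x)) then phi g1 g2 n q x + 1 else phi g1 g2 n q x - 1)"
  by (simp add: fstep_def funpow_shift)

declare phi.simps(2) [simp del]

lemma phi_cong_prefix: "(\<And>j. j < n \<Longrightarrow> q j = q' j) \<Longrightarrow> phi g1 g2 n q x = phi g1 g2 n q' x"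
  by (induction n) (auto simp: phi_Suc_explicit)

lemma phi_coalesced_add:
  "phi g1 g2 n q x = phi g1 g2 n q y \<Longrightarrow> phi g1 g2 (n + k) q x = phi g1 g2 (n + k) q y"
  by (induction k) (auto simp: phi_Suc_explicit)

lemma measurable_phi_PiM:
  assumes "{..<n} \<subseteq> I"
  shows "(\<lambda>q. phi g1 g2 n q x) \<in> PiM I (\<lambda>_. unit_interval) \<rightarrow>\<^sub>M count_space UNIV"
  using assms
proof (induction n)
  case 0
  then show ?case by simp
next
  case (Suc n)
  then have [measurable]: "(\<lambda>q. phi g1 g2 n q x) \<in> PiM I (\<lambda>_. unit_interval) \<rightarrow>\<^sub>M count_space UNIV"
    by (simp add: lessThan_Suc)
  have [measurable]: "(\<lambda>q. q n) \<in> borel_measurable (PiM I (\<lambda>_. unit_interval))"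
    using Suc.prems by (intro measurable_compose[OF measurable_component_singleton]
        measurable_restrict_space1) auto
  have [measurable]:
    "(\<lambda>q. g1 / (g1 + g2 * real (phi g1 g2 n q x))) \<in> borel_measurable (PiM I (\<lambda>_. unit_interval))"
    by (rule measurable_compose[of _ _ "count_space UNIV"]) simp_all
  show ?case
    unfolding phi_Suc_explicit by measurable
qed

lemma measurable_phi [measurable]: "(\<lambda>q. phi g1 g2 n q x) \<in> noise \<rightarrow>\<^sub>M count_space UNIV"
  unfolding noise_def by (rule measurable_phi_PiM) simp

lemma pred_pair_of_nat_valued:
  fixes f g :: "'a \<Rightarrow> nat"
  assumes [measurable]: "f \<in> M \<rightarrow>\<^sub>M count_space UNIV" "g \<in> M \<rightarrow>\<^sub>M count_space UNIV"
  shows "Measurable.pred M (\<lambda>x. Q (f x) (g x))"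
proof -
  have "(\<lambda>x. Q (f x) (g x)) = (\<lambda>x. \<exists>a b. Q a b \<and> f x = a \<and> g x = b)"
    by auto
  then show ?thesis
    by simp
qed

lemma decseq_measure_not_coalesced:
  "decseq (\<lambda>n. measure noise {q \<in> space noise. phi g1 g2 n q x \<noteq> phi g1 g2 n q y})"
  unfolding decseq_Suc_iff
proof
  fix n
  have "{q \<in> space noise. phi g1 g2 (Suc n) q x \<noteq> phi g1 g2 (Suc n) q y}
      \<subseteq> {q \<in> space noise. phi g1 g2 n q x \<noteq> phi g1 g2 n q y}"
    using phi_coalesced_add[of g1 g2 n _ x y 1] by fastforce
  then show "measure noise {q \<in> space noise. phi g1 g2 (Suc n) q x \<noteq> phi g1 g2 (Suc n) q y}
      \<le> measure noise {q \<in> space noise. phi g1 g2 n q x \<noteq> phi g1 g2 n q y}"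
    by (intro noise.finite_measure_mono) measurable
qed

lemma measure_prefix_event_Int_box:
  assumes A: "A \<in> sets (PiM {..<n} (\<lambda>_. unit_interval))" and S: "S \<in> sets unit_interval"
  shows "measure noise {q \<in> space noise. restrict q {..<n} \<in> A \<and> (\<forall>j\<in>{n..<n+m}. q j \<in> S)}
    = measure noise {q \<in> space noise. restrict q {..<n} \<in> A} * measure unit_interval S ^ m"
proof -
  let ?past = "\<lambda>q. restrict q {..<n}" and ?future = "\<lambda>q. restrict q {n..<n+m}"
  let ?box = "PiE {n..<n+m} (\<lambda>_. S)"
  have indep: "noise.indep_var
      (PiM {..<n} (\<lambda>_. unit_interval)) ?past (PiM {n..<n+m} (\<lambda>_. unit_interval)) ?future"
    by (rule noise.indep_var_restrict[OF indep_vars_noise_components]) auto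
  have box: "?box \<in> sets (PiM {n..<n+m} (\<lambda>_. unit_interval))"
    using S by (intro sets_PiM_I_finite) auto
  have "(\<lambda>q. (?past q, ?future q)) -` (A \<times> ?box) \<inter> space noise =
      {q \<in> space noise. restrict q {..<n} \<in> A \<and> (\<forall>j\<in>{n..<n+m}. q j \<in> S)}"
    "?past -` A \<inter> space noise = {q \<in> space noise. restrict q {..<n} \<in> A}"
    "?future -` ?box \<inter> space noise = {q \<in> space noise. \<forall>j\<in>{n..<n+m}. q j \<in> S}"
    by (auto simp: PiE_def Pi_def)
  moreover have "emeasure noise {q \<in> space noise. \<forall>j\<in>{n..<n+m}. q j \<in> S} = measure unit_interval S ^ m"
    unfolding noise_def using S
    by (simp add: noise_coords.emeasure_PiM_Collect noise_coords.M.emeasure_eq_measure ennreal_power)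
  ultimately show ?thesis
    using noise.indep_varD[OF indep A box] by (simp add: noise.emeasure_eq_measure)
qed

lemma measure_phi_event_Int_box:
  assumes S: "S \<in> sets unit_interval"
  shows "measure noise
      {q \<in> space noise. Q (phi g1 g2 n q x) (phi g1 g2 n q y) \<and> (\<forall>j\<in>{n..<n+m}. q j \<in> S)}
    = measure noise {q \<in> space noise. Q (phi g1 g2 n q x) (phi g1 g2 n q y)} * measure unit_interval S ^ m"
proof -
  define A where "A = {r \<in> space (PiM {..<n} (\<lambda>_. unit_interval)). Q (phi g1 g2 n r x) (phi g1 g2 n r y)}"
  have "A \<in> sets (PiM {..<n} (\<lambda>_. unit_interval))"
    unfolding A_def pred_def[symmetric]
    by (intro pred_pair_of_nat_valued measurable_phi_PiM) simp_all
  moreover have "restrict q {..<n} \<in> A \<longleftrightarrow> Q (phi g1 g2 n q x) (phi g1 g2 n q y)" if "q \<in> space noise" for q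
  proof -
    have "phi g1 g2 n (restrict q {..<n}) z = phi g1 g2 n q z" for z
      by (rule phi_cong_prefix) simp
    moreover have "restrict q {..<n} \<in> space (PiM {..<n} (\<lambda>_. unit_interval))"
      using that by (simp add: space_noise space_PiM space_restrict_space)
    ultimately show ?thesis
      by (simp add: A_def)
  qed
  ultimately show ?thesis
    using measure_prefix_event_Int_box[OF _ S, of A n m] by (simp cong: conj_cong)
qed

lemma card_image_eq_1_if_constant_on:
  assumes "A \<noteq> {}" and "\<And>x y. x \<in> A \<Longrightarrow> y \<in> A \<Longrightarrow> f x = f y"
  shows "card (f ` A) = 1"
proof -
  have "is_singleton (f ` A)"
  proof (rule is_singletonI')
    show "f ` A \<noteq> {}"
      using assms(1) by simp
    show "a = b" if "a \<in> f ` A" "b \<in> f ` A" for a b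
      using assms(2) that by blast
  qed
  then show ?thesis
    by (simp add: is_singleton_altdef)
qed

lemma setdist_eq_0_iff: "setdist x K = 0 \<longleftrightarrow> x \<in> K"
proof
  assume "x \<in> K"
  then show "setdist x K = 0"
    unfolding setdist_def by (intro antisym INF_lower2[of x] INF_greatest) auto
next
  assume "setdist x K = 0"
  moreover have "1 \<le> setdist x K" if "x \<notin> K"
  proof -
    have "1 \<le> \<bar>real x - real y\<bar>" if "y \<in> K" for y
      using \<open>x \<notin> K\<close> that by (cases x y rule: linorder_cases) auto
    then show ?thesis
      unfolding setdist_def by (intro INF_greatest) simp
  qed
  ultimately show "x \<in> K"
    by (cases "x \<in> K") simp_all
qed

lemma pred_mem_random_set:
  assumes "random_set K"
  shows "Measurable.pred noise (\<lambda>q. x \<in> K q)"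
proof -
  have [measurable]: "(\<lambda>q. setdist x (K q)) \<in> borel_measurable noise"
    using assms unfolding random_set_def by blast
  have "Measurable.pred noise (\<lambda>q. setdist x (K q) = 0)"
    by measurable
  then show ?thesis
    by (simp add: setdist_eq_0_iff)
qed

lemma pred_card_image_phi:
  assumes "finite_random_set K"
  shows "Measurable.pred noise (\<lambda>q. P (card (phi g1 g2 n q ` K q)))"
proof -
  have [measurable]: "Measurable.pred noise (\<lambda>q. x \<in> K q)" for x
    using assms pred_mem_random_set unfolding finite_random_set_def by blast
  have "(\<lambda>q. z \<in> phi g1 g2 n q ` K q) = (\<lambda>q. \<exists>x. x \<in> K q \<and> phi g1 g2 n q x = z)" for z
    by auto
  then have [measurable]: "Measurable.pred noise (\<lambda>q. z \<in> phi g1 g2 n q ` K q)" for z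
    by simp
  \<comment> \<open>the cardinality of a finite set of naturals is the countable sum of its indicator\<close>
  have "(\<lambda>q. enn2real (\<Sum>z. indicator (phi g1 g2 n q ` K q) z :: ennreal)) \<in> borel_measurable noise"
    by measurable
  moreover have "enn2real (\<Sum>z. indicator (phi g1 g2 n q ` K q) z :: ennreal) = real (card (phi g1 g2 n q ` K q))"
    if "q \<in> space noise" for q
    using assms that unfolding finite_random_set_def by (subst suminf_finite[of "phi g1 g2 n q ` K q"]) auto
  ultimately have [measurable]: "(\<lambda>q. real (card (phi g1 g2 n q ` K q))) \<in> borel_measurable noise"
    by (rule measurable_cong[THEN iffD1, rotated])
  have "(\<lambda>q. P (card (phi g1 g2 n q ` K q)))
      = (\<lambda>q. \<exists>k. P k \<and> real (card (phi g1 g2 n q ` K q)) = real k)"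
    by auto
  then show ?thesis
    by simp
qed

lemma sets_random_set_not_subset_atMost:
  assumes "random_set K"
  shows "{q \<in> space noise. \<not> K q \<subseteq> {..m}} \<in> sets noise"
proof -
  have [measurable]: "Measurable.pred noise (\<lambda>q. x \<in> K q)" for x
    using assms by (rule pred_mem_random_set)
  have "{q \<in> space noise. \<not> K q \<subseteq> {..m}} = {q \<in> space noise. \<exists>x. x \<in> K q \<and> m < x}"
    by (auto simp: not_le)
  then show ?thesis
    by simp
qed

lemma measure_random_set_unbounded_tendsto_0:
  assumes "finite_random_set K"
  shows "(\<lambda>m. measure noise {q \<in> space noise. \<not> K q \<subseteq> {..m}}) \<longlonglongrightarrow> 0"
proof -
  define A where "A m = {q \<in> space noise. \<not> K q \<subseteq> {..m}}" for m
  have "range A \<subseteq> sets noise"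
    using assms sets_random_set_not_subset_atMost unfolding A_def finite_random_set_def by blast
  moreover have "decseq A"
    unfolding A_def decseq_def by auto
  moreover have "(\<Inter>m. A m) = {}"
  proof -
    have "\<exists>m. K q \<subseteq> {..m}" if "q \<in> space noise" for q
      using assms that unfolding finite_random_set_def by (simp add: finite_nat_set_iff_bounded_le subset_eq)
    then show ?thesis
      unfolding A_def by blast
  qed
  ultimately show ?thesis
    using noise.finite_Lim_measure_decseq[of A] unfolding A_def by simp
qed

lemma measure_image_phi_not_singleton_le:
  assumes K: "finite_random_set K" and parity: "AE q in noise. K q \<subseteq> W i"
  shows "measure noise {q \<in> space noise. card (phi g1 g2 n q ` K q) \<noteq> 1}
    \<le> measure noise {q \<in> space noise. \<not> K q \<subseteq> {..m}}
      + (\<Sum>(x, y) \<in> (W i \<inter> {..m}) \<times> (W i \<inter> {..m}).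
          measure noise {q \<in> space noise. phi g1 g2 n q x \<noteq> phi g1 g2 n q y})"
proof -
  let ?P = "(W i \<inter> {..m}) \<times> (W i \<inter> {..m})"
  define U where "U = {q \<in> space noise. \<not> K q \<subseteq> {..m}}"
  define D where "D x y = {q \<in> space noise. phi g1 g2 n q x \<noteq> phi g1 g2 n q y}" for x y
  have U: "U \<in> sets noise"
    using K sets_random_set_not_subset_atMost unfolding U_def finite_random_set_def by blast
  have D: "D x y \<in> sets noise" for x y
    unfolding D_def by measurable
  have UD: "(\<Union>(x, y)\<in>?P. D x y) \<in> sets noise"
    by (intro sets.finite_UN) (auto simp: D)
  have cover: "q \<in> {q \<in> space noise. card (phi g1 g2 n q ` K q) \<noteq> 1}
      \<longrightarrow> q \<in> U \<union> (\<Union>(x, y)\<in>?P. D x y)" if "K q \<subseteq> W i" for q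
  proof (intro impI, elim CollectE conjE, rule ccontr)
    assume q: "q \<in> space noise" and card: "card (phi g1 g2 n q ` K q) \<noteq> 1"
    assume not_covered: "q \<notin> U \<union> (\<Union>(x, y)\<in>?P. D x y)"
    then have "q \<notin> U"
      by blast
    then have bounded: "K q \<subseteq> W i \<inter> {..m}"
      using q \<open>K q \<subseteq> W i\<close> by (simp add: U_def)
    have coalesced: "phi g1 g2 n q x = phi g1 g2 n q y" if "x \<in> K q" "y \<in> K q" for x y
    proof -
      have "(x, y) \<in> ?P"
        using bounded that by blast
      then have "q \<notin> D x y"
        using not_covered by blast
      then show ?thesis
        using q by (simp add: D_def)
    qed
    have "K q \<noteq> {}"
      using K q unfolding finite_random_set_def by blast
    with card card_image_eq_1_if_constant_on[of "K q", OF _ coalesced] show False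
      by simp
  qed
  have "AE q in noise. q \<in> {q \<in> space noise. card (phi g1 g2 n q ` K q) \<noteq> 1}
      \<longrightarrow> q \<in> U \<union> (\<Union>(x, y)\<in>?P. D x y)"
    by (rule eventually_mono[OF parity cover])
  then have "measure noise {q \<in> space noise. card (phi g1 g2 n q ` K q) \<noteq> 1}
      \<le> measure noise (U \<union> (\<Union>(x, y)\<in>?P. D x y))"
    by (rule noise.finite_measure_mono_AE) (intro sets.Un U UD)
  also have "\<dots> \<le> measure noise U + measure noise (\<Union>(x, y)\<in>?P. D x y)"
    by (rule measure_Un_le[OF U UD])
  also have "measure noise (\<Union>(x, y)\<in>?P. D x y) \<le> (\<Sum>(x, y)\<in>?P. measure noise (D x y))"
    using measure_UNION_le[of ?P "\<lambda>(x, y). D x y" noise] D by (simp add: split_def)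
  finally show ?thesis
    unfolding U_def D_def by simp
qed

lemma decseq_tendsto_0_by_contraction:
  fixes u :: "nat \<Rightarrow> real"
  assumes dec: "decseq u" and nonneg: "\<And>n. 0 \<le> u n"
    and contraction: "\<And>\<epsilon>. 0 < \<epsilon> \<Longrightarrow> \<exists>R \<delta>. 0 < \<delta> \<and> (\<forall>n. u (n + R) \<le> (1 - \<delta>) * u n + \<delta> * \<epsilon>)"
  shows "u \<longlonglongrightarrow> 0"
proof -
  define L where "L = (INF n. u n)"
  have lim: "u \<longlonglongrightarrow> L"
    unfolding L_def using nonneg dec by (intro LIMSEQ_decseq_INF bdd_belowI2) auto
  have "L \<le> \<epsilon>" if \<epsilon>: "0 < \<epsilon>" for \<epsilon>
  proof -
    obtain R \<delta> where \<delta>: "0 < \<delta>" and R: "\<And>n. u (n + R) \<le> (1 - \<delta>) * u n + \<delta> * \<epsilon>"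
      using contraction[OF \<epsilon>] by blast
    have "(\<lambda>n. u (n + R)) \<longlonglongrightarrow> L"
      using lim by (rule LIMSEQ_ignore_initial_segment)
    moreover have "(\<lambda>n. (1 - \<delta>) * u n + \<delta> * \<epsilon>) \<longlonglongrightarrow> (1 - \<delta>) * L + \<delta> * \<epsilon>"
      using lim by (intro tendsto_intros)
    ultimately have "L \<le> (1 - \<delta>) * L + \<delta> * \<epsilon>"
      using R by (intro LIMSEQ_le) auto
    then have "\<delta> * L \<le> \<delta> * \<epsilon>"
      by (simp add: left_diff_distrib)
    then show ?thesis
      using \<delta> by simp
  qed
  then have "L \<le> 0"
    by (metis field_le_epsilon add.left_neutral)
  moreover have "0 \<le> L"
    unfolding L_def using nonneg by (intro cINF_greatest) auto
  ultimately show ?thesis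
    using lim by simp
qed

lemma tendsto_0_by_approximation:
  fixes u :: "nat \<Rightarrow> real"
  assumes nonneg: "\<And>n. 0 \<le> u n" and a: "a \<longlonglongrightarrow> 0" and b: "\<And>m. b m \<longlonglongrightarrow> 0"
    and bound: "\<And>m n. u n \<le> a m + b m n"
  shows "u \<longlonglongrightarrow> 0"
proof (rule order_tendstoI)
  show "\<forall>\<^sub>F n in sequentially. c < u n" if "c < 0" for c
    using less_le_trans[OF that nonneg] by simp
  show "\<forall>\<^sub>F n in sequentially. u n < r" if "0 < r" for r
  proof -
    have "\<forall>\<^sub>F m in sequentially. a m < r / 2"
      by (rule order_tendstoD(2)[OF a]) (simp add: that)
    then obtain m where m: "a m < r / 2"
      using eventually_happens'[OF sequentially_bot] by blast
    have "\<forall>\<^sub>F n in sequentially. b m n < r / 2"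
      by (rule order_tendstoD(2)[OF b]) (simp add: that)
    then show ?thesis
    proof eventually_elim
      case (elim n)
      then show ?case
        using m bound[where m = m and n = n] by linarith
    qed
  qed
qed

context
  fixes g1 g2 :: real
  assumes g1_pos: "0 < g1" and g2_pos: "0 < g2"
begin

lemma phi_Suc_up_or_down:
  assumes "q n < 1"
  shows "phi g1 g2 (Suc n) q x = phi g1 g2 n q x + 1 \<or> phi g1 g2 (Suc n) q x + 1 = phi g1 g2 n q x"
  using assms g1_pos by (cases "phi g1 g2 n q x") (auto simp: phi_Suc_explicit)

lemma phi_mod_2:
  assumes "\<And>j. j < n \<Longrightarrow> q j < 1"
  shows "phi g1 g2 n q x mod 2 = (x + n) mod 2"
  using assms
proof (induction n)
  case (Suc n)
  then have IH: "phi g1 g2 n q x mod 2 = (x + n) mod 2" and "q n < 1"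
    by auto
  then consider "phi g1 g2 (Suc n) q x = phi g1 g2 n q x + 1" | "phi g1 g2 (Suc n) q x + 1 = phi g1 g2 n q x"
    using phi_Suc_up_or_down by blast
  then show ?case
    using IH by cases presburger+
qed simp

lemma up_threshold_le_at_1:
  assumes "1 \<le> z"
  shows "g1 / (g1 + g2 * real z) \<le> g1 / (g1 + g2)"
  using assms g1_pos g2_pos by (intro divide_left_mono) (auto simp: add_pos_pos)

lemma phi_descends:
  assumes "\<And>j. n \<le> j \<Longrightarrow> j < n + k \<Longrightarrow> g1 / (g1 + g2) \<le> q j \<and> q j < 1"
  shows "phi g1 g2 (n + k) q x \<le> max (phi g1 g2 n q x - k) 1"
  using assms
proof (induction k)
  case (Suc k)
  let ?z = "phi g1 g2 (n + k) q x"
  have IH: "?z \<le> max (phi g1 g2 n q x - k) 1" and q: "g1 / (g1 + g2) \<le> q (n + k)" "q (n + k) < 1"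
    using Suc by auto
  show ?case
  proof (cases "?z = 0")
    case True
    then show ?thesis using q g1_pos by (simp add: phi_Suc_explicit)
  next
    case False
    then have "g1 / (g1 + g2 * real ?z) \<le> q (n + k)"
      using up_threshold_le_at_1[of ?z] q by linarith
    then have "phi g1 g2 (n + Suc k) q x = ?z - 1"
      by (simp add: phi_Suc_explicit)
    then show ?thesis using IH by auto
  qed
qed simp

lemma phi_meet_after_descent:
  assumes "x mod 2 = y mod 2" and "\<And>j. j < n + R \<Longrightarrow> q j < 1"
    and "\<And>j. n \<le> j \<Longrightarrow> j < n + R \<Longrightarrow> g1 / (g1 + g2) \<le> q j"
    and "phi g1 g2 n q x \<le> R" and "phi g1 g2 n q y \<le> R"
  shows "phi g1 g2 (n + R) q x = phi g1 g2 (n + R) q y"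
proof -
  have "phi g1 g2 (n + R) q x \<le> 1" "phi g1 g2 (n + R) q y \<le> 1"
    using phi_descends[of n R q x] phi_descends[of n R q y] assms(2-5) by fastforce+
  moreover have "phi g1 g2 (n + R) q x mod 2 = phi g1 g2 (n + R) q y mod 2"
    using phi_mod_2[of "n + R" q x] phi_mod_2[of "n + R" q y] assms(1,2) by presburger
  ultimately show ?thesis
    by presburger
qed

lemma phi_Suc_ge_cases:
  assumes "3 * g1 \<le> g2 * real j" and "0 \<le> q n" and "Suc j \<le> phi g1 g2 (Suc n) q y"
  shows "(phi g1 g2 n q y = j \<or> phi g1 g2 n q y = Suc j) \<and> q n \<in> {0..<1/4}
    \<or> Suc (Suc j) \<le> phi g1 g2 n q y"
proof (rule disjCI)
  let ?z = "phi g1 g2 n q y"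
  assume "\<not> Suc (Suc j) \<le> ?z"
  with assms(3) have near: "?z = j \<or> ?z = Suc j" and up: "q n < g1 / (g1 + g2 * real ?z)"
    by (auto simp: phi_Suc_explicit split: if_splits)
  have "3 * g1 \<le> g2 * real ?z"
    using assms(1) near g2_pos by (smt (verit) mult_left_mono of_nat_Suc of_nat_mono)
  then have "g1 / (g1 + g2 * real ?z) \<le> 1/4"
    using g1_pos by (simp add: divide_le_eq)
  then have "q n < 1/4"
    using up by linarith
  then show "(?z = j \<or> ?z = Suc j) \<and> q n \<in> {0..<1/4}"
    using near assms(2) by simp
qed

lemma measure_phi_ge_Suc_le:
  assumes "3 * g1 \<le> g2 * real j"
  shows "measure noise {q \<in> space noise. Suc j \<le> phi g1 g2 (Suc n) q y}
    \<le> 3/4 * measure noise {q \<in> space noise. Suc (Suc j) \<le> phi g1 g2 n q y}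
      + 1/4 * measure noise {q \<in> space noise. j \<le> phi g1 g2 n q y}"
proof -
  let ?z = "\<lambda>q. phi g1 g2 n q y"
  let ?high = "{q \<in> space noise. Suc (Suc j) \<le> ?z q}"
  let ?near = "{q \<in> space noise. ?z q = j \<or> ?z q = Suc j}"
  let ?near_up = "{q \<in> space noise. (?z q = j \<or> ?z q = Suc j) \<and> (\<forall>i\<in>{n..<n+1}. q i \<in> {0..<1/4})}"
  have [measurable]: "{0..<1/4} \<in> sets unit_interval"
    and quarter: "measure unit_interval {0..<1/4} = 1/4"
    by (simp_all add: measure_unit_interval_atLeastLessThan)
  have cover: "{q \<in> space noise. Suc j \<le> phi g1 g2 (Suc n) q y} \<subseteq> ?high \<union> ?near_up"
    using phi_Suc_ge_cases[OF assms] by (auto simp: space_noise)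
  have "measure noise {q \<in> space noise. Suc j \<le> phi g1 g2 (Suc n) q y}
      \<le> measure noise (?high \<union> ?near_up)"
    using cover by (intro noise.finite_measure_mono) measurable
  also have "\<dots> \<le> measure noise ?high + measure noise ?near_up"
    by (intro measure_Un_le) measurable
  moreover have "measure noise ?near_up = measure noise ?near * (1/4)"
    using measure_phi_event_Int_box[of "{0..<1/4}" "\<lambda>a b. b = j \<or> b = Suc j" g1 g2 n y y 1]
    by (simp add: quarter)
  moreover have "measure noise {q \<in> space noise. j \<le> ?z q} = measure noise ?high + measure noise ?near"
  proof -
    have "{q \<in> space noise. j \<le> ?z q} = ?high \<union> ?near"
      by auto
    then show ?thesis
      by (simp add: noise.finite_measure_Union disjoint_iff)
  qed
  ultimately show ?thesis
    by linarith
qed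

lemma measure_phi_ge_le_geometric:
  assumes "y < J" and J: "3 * g1 \<le> g2 * real J"
  shows "measure noise {q \<in> space noise. k \<le> phi g1 g2 n q y} \<le> 2 ^ Suc J / 2 ^ k"
proof -
  have trivial: "measure noise E \<le> 2 ^ Suc J / 2 ^ k" if "k \<le> Suc J" for E k
  proof -
    have "(2::real) ^ k \<le> 2 ^ Suc J"
      using that by (intro power_increasing) auto
    then have "1 \<le> (2::real) ^ Suc J / 2 ^ k"
      by simp
    then show ?thesis
      using noise.prob_le_1[of E] by linarith
  qed
  show ?thesis
  proof (induction n arbitrary: k)
    case 0
    show ?case
    proof (cases "k \<le> Suc J")
      case False
      then have "\<not> k \<le> y"
        using \<open>y < J\<close> by simp
      then show ?thesis
        by simp
    qed (rule trivial)
  next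
    case (Suc n)
    show ?case
    proof (cases "k \<le> Suc J")
      case False
      then obtain j where k: "k = Suc j" and "J \<le> j"
        by (cases k) auto
      then have "3 * g1 \<le> g2 * real j"
        using J g2_pos by (smt (verit) mult_left_mono of_nat_mono)
      then have "measure noise {q \<in> space noise. k \<le> phi g1 g2 (Suc n) q y}
          \<le> 3/4 * measure noise {q \<in> space noise. Suc (Suc j) \<le> phi g1 g2 n q y}
            + 1/4 * measure noise {q \<in> space noise. j \<le> phi g1 g2 n q y}"
        unfolding k by (rule measure_phi_ge_Suc_le)
      also have "\<dots> \<le> 3/4 * (2 ^ Suc J / 2 ^ Suc (Suc j)) + 1/4 * (2 ^ Suc J / 2 ^ j)"
        by (intro add_mono mult_left_mono Suc.IH) simp_all
      also have "\<dots> = 7/16 * (2 ^ Suc J / 2 ^ j)"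
        by simp
      also have "\<dots> \<le> 1/2 * (2 ^ Suc J / 2 ^ j)"
        by (intro mult_right_mono) simp_all
      also have "\<dots> = 2 ^ Suc J / 2 ^ k"
        by (simp add: k)
      finally show ?thesis .
    qed (rule trivial)
  qed
qed

lemma phi_tail_bound:
  obtains A where "\<And>n k. measure noise {q \<in> space noise. k \<le> phi g1 g2 n q y} \<le> A / 2 ^ k"
proof -
  obtain J :: nat where J: "max (real y) (3 * g1 / g2) < J"
    using reals_Archimedean2 by blast
  then have "y < J" and "3 * g1 \<le> g2 * real J"
    using g2_pos by (simp_all add: pos_divide_less_eq mult.commute)
  then show thesis
    by (rule that[OF measure_phi_ge_le_geometric])
qed

lemma AE_apart_imp_no_descent:
  assumes "x mod 2 = y mod 2"
  shows "AE q in noise. phi g1 g2 (n + R) q x \<noteq> phi g1 g2 (n + R) q y \<longrightarrow>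
    phi g1 g2 n q x \<noteq> phi g1 g2 n q y \<and>
    \<not> (phi g1 g2 n q x \<le> R \<and> phi g1 g2 n q y \<le> R \<and> (\<forall>j\<in>{n..<n+R}. g1 / (g1 + g2) \<le> q j))"
  using AE_noise_less_1
proof eventually_elim
  case (elim q)
  show ?case
  proof (intro impI conjI notI)
    assume "phi g1 g2 (n + R) q x \<noteq> phi g1 g2 (n + R) q y" and "phi g1 g2 n q x = phi g1 g2 n q y"
    then show False
      using phi_coalesced_add[of g1 g2 n q x y R] by simp
  next
    assume apart: "phi g1 g2 (n + R) q x \<noteq> phi g1 g2 (n + R) q y"
      and descent: "phi g1 g2 n q x \<le> R \<and> phi g1 g2 n q y \<le> R \<and> (\<forall>j\<in>{n..<n+R}. g1 / (g1 + g2) \<le> q j)"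
    have "phi g1 g2 (n + R) q x = phi g1 g2 (n + R) q y"
      using elim descent by (intro phi_meet_after_descent[OF assms]) auto
    then show False
      using apart by simp
  qed
qed

lemma measure_not_coalesced_contracts:
  fixes x y n R :: nat
  assumes parity: "x mod 2 = y mod 2"
  defines "\<delta> \<equiv> (g2 / (g1 + g2)) ^ R"
  shows "measure noise {q \<in> space noise. phi g1 g2 (n + R) q x \<noteq> phi g1 g2 (n + R) q y}
    \<le> (1 - \<delta>) * measure noise {q \<in> space noise. phi g1 g2 n q x \<noteq> phi g1 g2 n q y}
      + \<delta> * (measure noise {q \<in> space noise. Suc R \<le> phi g1 g2 n q x}
        + measure noise {q \<in> space noise. Suc R \<le> phi g1 g2 n q y})"
proof -
  let ?apart = "\<lambda>n. {q \<in> space noise. phi g1 g2 n q x \<noteq> phi g1 g2 n q y}"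
  let ?tail = "\<lambda>z. {q \<in> space noise. Suc R \<le> phi g1 g2 n q z}"
  let ?S = "{g1 / (g1 + g2)..<1}"
  let ?low = "{q \<in> space noise.
      phi g1 g2 n q x \<le> R \<and> phi g1 g2 n q y \<le> R \<and> phi g1 g2 n q x \<noteq> phi g1 g2 n q y}"
  let ?descent = "{q \<in> space noise.
      (phi g1 g2 n q x \<le> R \<and> phi g1 g2 n q y \<le> R \<and> phi g1 g2 n q x \<noteq> phi g1 g2 n q y)
      \<and> (\<forall>j\<in>{n..<n+R}. q j \<in> ?S)}"
  have \<delta>_nonneg: "0 \<le> \<delta>"
    unfolding \<delta>_def using g1_pos g2_pos by simp
  have S_le_1: "g1 / (g1 + g2) \<le> 1"
    using g1_pos g2_pos by simp
  have [measurable]: "?S \<in> sets unit_interval" and "measure unit_interval ?S = g2 / (g1 + g2)"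
    using measure_unit_interval_atLeastLessThan[OF _ S_le_1] g1_pos g2_pos by (simp_all add: field_simps)
  then have descent: "measure noise ?descent = measure noise ?low * \<delta>"
    using measure_phi_event_Int_box[of ?S "\<lambda>a b. a \<le> R \<and> b \<le> R \<and> a \<noteq> b" g1 g2 n x y R]
    by (simp add: \<delta>_def)
  have "?apart n \<subseteq> ?low \<union> ?tail x \<union> ?tail y"
    by auto
  then have "measure noise (?apart n) \<le> measure noise (?low \<union> ?tail x \<union> ?tail y)"
    by (intro noise.finite_measure_mono) measurable
  also have "\<dots> \<le> measure noise ?low + measure noise (?tail x) + measure noise (?tail y)"
    by (intro measure_Un_le[THEN order_trans] add_right_mono measure_Un_le) measurable
  finally have low:
    "measure noise (?apart n) - measure noise (?tail x) - measure noise (?tail y) \<le> measure noise ?low"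
    by simp
  have "AE q in noise. q \<in> ?apart (n + R) \<longrightarrow> q \<in> ?apart n - ?descent"
    using AE_apart_imp_no_descent[OF parity, of n R] by eventually_elim auto
  moreover have sets: "?apart n \<in> sets noise" "?descent \<in> sets noise"
    by measurable
  ultimately have "measure noise (?apart (n + R)) \<le> measure noise (?apart n - ?descent)"
    by (intro noise.finite_measure_mono_AE sets.Diff)
  also have "\<dots> = measure noise (?apart n) - measure noise ?descent"
    by (rule noise.finite_measure_Diff[OF sets]) auto
  also have "\<dots> \<le> (1 - \<delta>) * measure noise (?apart n)
      + \<delta> * (measure noise (?tail x) + measure noise (?tail y))"
    using mult_right_mono[OF low \<delta>_nonneg] unfolding descent by (simp add: algebra_simps)
  finally show ?thesis .
qed

lemma measure_not_coalesced_tendsto_0: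
  assumes parity: "x mod 2 = y mod 2"
  shows "(\<lambda>n. measure noise {q \<in> space noise. phi g1 g2 n q x \<noteq> phi g1 g2 n q y}) \<longlonglongrightarrow> 0"
proof (rule decseq_tendsto_0_by_contraction[OF decseq_measure_not_coalesced measure_nonneg])
  fix \<epsilon> :: real
  assume "0 < \<epsilon>"
  obtain Ax where Ax: "\<And>n k. measure noise {q \<in> space noise. k \<le> phi g1 g2 n q x} \<le> Ax / 2 ^ k"
    using phi_tail_bound[of x] by blast
  obtain Ay where Ay: "\<And>n k. measure noise {q \<in> space noise. k \<le> phi g1 g2 n q y} \<le> Ay / 2 ^ k"
    using phi_tail_bound[of y] by blast
  have "(\<lambda>k. (Ax + Ay) / 2 ^ k) \<longlonglongrightarrow> 0"
    by (rule LIMSEQ_divide_realpow_zero) simp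
  then obtain R where "\<forall>k\<ge>R. (Ax + Ay) / 2 ^ k < \<epsilon>"
    using order_tendstoD(2)[OF _ \<open>0 < \<epsilon>\<close>] eventually_sequentially by metis
  then have R: "(Ax + Ay) / 2 ^ Suc R < \<epsilon>"
    using le_SucI[OF order_refl] by blast
  define \<delta> where "\<delta> = (g2 / (g1 + g2)) ^ R"
  have "0 < \<delta>"
    unfolding \<delta>_def using g1_pos g2_pos by simp
  moreover have "measure noise {q \<in> space noise. phi g1 g2 (n + R) q x \<noteq> phi g1 g2 (n + R) q y}
      \<le> (1 - \<delta>) * measure noise {q \<in> space noise. phi g1 g2 n q x \<noteq> phi g1 g2 n q y} + \<delta> * \<epsilon>" for n
  proof -
    have "measure noise {q \<in> space noise. Suc R \<le> phi g1 g2 n q x}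
        + measure noise {q \<in> space noise. Suc R \<le> phi g1 g2 n q y} \<le> \<epsilon>"
      using Ax[where n = n and k = "Suc R"] Ay[where n = n and k = "Suc R"] R by (simp add: add_divide_distrib)
    then have "\<delta> * (measure noise {q \<in> space noise. Suc R \<le> phi g1 g2 n q x}
        + measure noise {q \<in> space noise. Suc R \<le> phi g1 g2 n q y}) \<le> \<delta> * \<epsilon>"
      using \<open>0 < \<delta>\<close> by (intro mult_left_mono) auto
    then show ?thesis
      using measure_not_coalesced_contracts[OF parity, of n R]
      unfolding \<delta>_def[symmetric] by linarith
  qed
  ultimately show "\<exists>R \<delta>. 0 < \<delta> \<and> (\<forall>n.
      measure noise {q \<in> space noise. phi g1 g2 (n + R) q x \<noteq> phi g1 g2 (n + R) q y}
      \<le> (1 - \<delta>) * measure noise {q \<in> space noise. phi g1 g2 n q x \<noteq> phi g1 g2 n q y} + \<delta> * \<epsilon>)"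
    by blast
qed

lemma measure_image_phi_not_singleton_tendsto_0:
  assumes K: "finite_random_set K" and parity: "AE q in noise. K q \<subseteq> W i"
  shows "(\<lambda>n. measure noise {q \<in> space noise. card (phi g1 g2 n q ` K q) \<noteq> 1}) \<longlonglongrightarrow> 0"
proof (rule tendsto_0_by_approximation[where
      a = "\<lambda>m. measure noise {q \<in> space noise. \<not> K q \<subseteq> {..m}}" and
      b = "\<lambda>m n. \<Sum>(x, y) \<in> (W i \<inter> {..m}) \<times> (W i \<inter> {..m}).
        measure noise {q \<in> space noise. phi g1 g2 n q x \<noteq> phi g1 g2 n q y}"])
  show "(\<lambda>m. measure noise {q \<in> space noise. \<not> K q \<subseteq> {..m}}) \<longlonglongrightarrow> 0"
    using K by (rule measure_random_set_unbounded_tendsto_0)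
  show "(\<lambda>n. \<Sum>(x, y) \<in> (W i \<inter> {..m}) \<times> (W i \<inter> {..m}).
      measure noise {q \<in> space noise. phi g1 g2 n q x \<noteq> phi g1 g2 n q y}) \<longlonglongrightarrow> 0" for m
  proof (rule tendsto_null_sum)
    fix p
    assume "p \<in> (W i \<inter> {..m}) \<times> (W i \<inter> {..m})"
    then obtain x y where p: "p = (x, y)" and "x mod 2 = y mod 2"
      by (auto simp: W_def)
    then show "(\<lambda>n. case p of (x, y) \<Rightarrow>
        measure noise {q \<in> space noise. phi g1 g2 n q x \<noteq> phi g1 g2 n q y}) \<longlonglongrightarrow> 0"
      using measure_not_coalesced_tendsto_0 by simp
  qed
qed (rule measure_nonneg measure_image_phi_not_singleton_le[OF K parity])+

end

theorem proposition3p7: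
  fixes g1 g2 :: real and K :: "(nat \<Rightarrow> real) \<Rightarrow> nat set"
  assumes "g1 > 0" and "g2 > 0"
    and "finite_random_set K"
    and "\<exists>i\<in>{0,1}. AE q in noise. K q \<subseteq> W i"
  shows "\<forall>e>0.
      (\<forall>n. {q\<in>space noise. \<bar>real (card (phi g1 g2 n q ` K q)) - 1\<bar> > e} \<in> sets noise) \<and>
      ((\<lambda>n. measure noise {q\<in>space noise. \<bar>real (card (phi g1 g2 n q ` K q)) - 1\<bar> > e})
         \<longlonglongrightarrow> 0)"
proof (intro allI impI conjI)
  fix e :: real
  assume "0 < e"
  have [measurable]: "Measurable.pred noise (\<lambda>q. P (card (phi g1 g2 n q ` K q)))" for n P
    using assms(3) by (rule pred_card_image_phi)
  show "{q \<in> space noise. \<bar>real (card (phi g1 g2 n q ` K q)) - 1\<bar> > e} \<in> sets noise" for n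
    by measurable
  obtain i where "AE q in noise. K q \<subseteq> W i"
    using assms(4) by blast
  with assms(1-3) have lim:
    "(\<lambda>n. measure noise {q \<in> space noise. card (phi g1 g2 n q ` K q) \<noteq> 1}) \<longlonglongrightarrow> 0"
    by (rule measure_image_phi_not_singleton_tendsto_0)
  have "{q \<in> space noise. \<bar>real (card (phi g1 g2 n q ` K q)) - 1\<bar> > e}
      \<subseteq> {q \<in> space noise. card (phi g1 g2 n q ` K q) \<noteq> 1}" for n
    using \<open>0 < e\<close> by auto
  then have "measure noise {q \<in> space noise. \<bar>real (card (phi g1 g2 n q ` K q)) - 1\<bar> > e}
      \<le> measure noise {q \<in> space noise. card (phi g1 g2 n q ` K q) \<noteq> 1}" for n
    by (intro noise.finite_measure_mono) measurable
  then show
    "(\<lambda>n. measure noise {q \<in> space noise. \<bar>real (card (phi g1 g2 n q ` K q)) - 1\<bar> > e}) \<longlonglongrightarrow> 0"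
    by (intro tendsto_sandwich[OF always_eventually always_eventually tendsto_const lim]) simp_all
qed

end
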